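(* Let $n\ge1$ and let $G$ be the $n\times n$ comparability grid. Let $X\subseteq V(G)$ satisfy $|X|\le n^2/2$ and $r(X)\le n/4$. Then $|X|<n^2/3$.
   Context: For positive integers $m,n$, the $m\times n$ comparability grid is the simple graph with vertex set $\{1,\dots,m\}\times\{1,\dots,n\}$ in which distinct vertices $(i,j)$ and $(i',j')$ are adjacent iff either ($i\le i'$ and $j\le j'$) or ($i\ge i'$ and $j\ge j'$). For a graph $G$ and $X\subseteq V(G)$, the cut-rank $r(X)$ is the rank over $\mathrm{GF}(2)$ of the submatrix of the adjacency matrix of $G$ with rows indexed by $X$ and columns indexed by $V(G)\setminus X$. *)

theory Defs
  imports "HOL-Library.Z2" "HOL-Library.Product_Lexorder" "Jordan_Normal_Form.DL_Rank"
begin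

definition grid_vertices :: "nat \<Rightarrow> nat \<Rightarrow> (nat \<times> nat) set" where
  "grid_vertices m n = {1..m} \<times> {1..n}"

definition comp_grid_adj :: "nat \<times> nat \<Rightarrow> nat \<times> nat \<Rightarrow> bool" where
  "comp_grid_adj v w \<longleftrightarrow> v \<noteq> w \<and>
     ((fst v \<le> fst w \<and> snd v \<le> snd w) \<or> (fst v \<ge> fst w \<and> snd v \<ge> snd w))"

text \<open>Submatrix of the adjacency matrix over GF(2), rows indexed by X and columns by V - X
  (both listed in increasing lexicographic order).\<close>
definition cut_matrix :: "('a::linorder) set \<Rightarrow> ('a \<Rightarrow> 'a \<Rightarrow> bool) \<Rightarrow> 'a set \<Rightarrow> bit mat" where
  "cut_matrix V adj X =
     (let xs = sorted_list_of_set X; ys = sorted_list_of_set (V - X)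
      in mat (length xs) (length ys) (\<lambda>(i, j). if adj (xs ! i) (ys ! j) then 1 else 0))"

definition cut_rank :: "('a::linorder) set \<Rightarrow> ('a \<Rightarrow> 'a \<Rightarrow> bool) \<Rightarrow> 'a set \<Rightarrow> nat" where
  "cut_rank V adj X = vec_space.rank (card X) (cut_matrix V adj X)"

end

theory Submission
  imports Defs
begin

text \<open>A column or row of the grid is \<^emph>\<open>mixed\<close> if it meets both X and its complement.
  For a mixed column i, either its bottom vertex (i, 1) lies outside X and some (i, h) with h > 1
  lies in X, or vice versa. Pairing these two vertices of each column of the first kind gives a
  triangular pattern in the cut matrix, because (i, h) and (j, 1) are incomparable for i < j and
  h > 1; so there are at most r(X) such columns, likewise for the second kind, and at most 2 r(X)
  mixed columns; the same holds for rows. If r(X) \<le> n/4, at most n/2 columns and n/2 rows are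
  mixed, so there is a pure column and a pure row. Where they cross, either both lie in X or both
  avoid it; in the first case every vertex outside X lies in a mixed column and a mixed row, in
  the second every vertex of X does. Hence |X| \<le> n^2/4 or |X| \<ge> 3n^2/4, and the
  second alternative is excluded by |X| \<le> n^2/2.\<close>

text \<open>The pivot condition says that S can be ordered so that the submatrix with rows r i and
  columns c i is triangular with nonzero diagonal.\<close>

lemma card_le_rank_if_pivots:
  fixes A :: "'a::field mat" and S :: "'b set" and r c :: "'b \<Rightarrow> nat"
  assumes A: "A \<in> carrier_mat n nc" and S: "finite S"
    and idx: "\<forall>i\<in>S. r i < n \<and> c i < nc"
    and diag: "\<forall>i\<in>S. A $$ (r i, c i) \<noteq> 0"
    and pivot: "\<And>T. T \<subseteq> S \<Longrightarrow> T \<noteq> {} \<Longrightarrow> \<exists>i\<in>T. \<forall>j\<in>T - {i}. A $$ (r i, c j) = 0"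
  shows "card S \<le> vec_space.rank n A"
proof -
  interpret vec_space "TYPE('a)" n .
  let ?col = "\<lambda>j. col A (c j)"
  have entry: "?col j $ r i = A $$ (r i, c j)" if "i \<in> S" "j \<in> S" for i j
    using that idx A by auto
  have inj: "inj_on ?col S"
  proof (rule inj_onI, rule ccontr)
    fix i j assume ij: "i \<in> S" "j \<in> S" "?col i = ?col j" "i \<noteq> j"
    then obtain k where "k \<in> {i, j}" "\<forall>l\<in>{i, j} - {k}. A $$ (r k, c l) = 0"
      using pivot[of "{i, j}"] by blast
    then show False using ij diag entry by (metis insert_Diff_if insertE insertI1 singletonD)
  qed
  let ?U = "?col ` S"
  have U: "?U \<subseteq> set (cols A)" "?U \<subseteq> carrier_vec n" "finite ?U"
    using idx A S by (auto simp: cols_def)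
  have "lin_indpt ?U"
  proof
    assume "lin_dep ?U"
    then obtain a w where a: "lincomb a ?U = 0\<^sub>v n" "w \<in> ?U" "a w \<noteq> 0"
      using finite_lin_dep U by blast
    obtain i where i: "i \<in> S" "a (?col i) \<noteq> 0" "\<forall>j\<in>S - {i}. a (?col j) \<noteq> 0 \<longrightarrow> A $$ (r i, c j) = 0"
      using pivot[of "{j \<in> S. a (?col j) \<noteq> 0}"] a(2,3) by blast
    have "lincomb a ?U $ r i = (\<Sum>j\<in>S. a (?col j) * ?col j $ r i)"
      using lincomb_index[of "r i" ?U a] U i idx sum.reindex[OF inj] by (simp add: comp_def)
    also have "\<dots> = a (?col i) * ?col i $ r i + (\<Sum>j\<in>S - {i}. a (?col j) * ?col j $ r i)"
      by (rule sum.remove[OF S i(1)])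
    also have "\<dots> = a (?col i) * A $$ (r i, c i)"
      using i entry by (auto intro!: sum.neutral)
    also have "\<dots> \<noteq> 0"
      using i diag by simp
    finally show False
      using a(1) i idx by simp
  qed
  then have "card ?U \<le> rank A"
    using rank_ge_card_indpt[OF A U(1)] by blast
  then show ?thesis
    using card_image[OF inj] by simp
qed

lemma carrier_cut_matrix:
  assumes "finite V" "X \<subseteq> V"
  shows "cut_matrix V adj X \<in> carrier_mat (card X) (card (V - X))"
  using assms finite_subset by (auto simp: cut_matrix_def)

lemma index_cut_matrix:
  assumes "finite V" "X \<subseteq> V" "p < card X" "q < card (V - X)"
  shows "cut_matrix V adj X $$ (p, q) =
    (if adj (sorted_list_of_set X ! p) (sorted_list_of_set (V - X) ! q) then 1 else 0)"
  using assms finite_subset by (auto simp: cut_matrix_def)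

lemma ex_nth_sorted_list_of_set:
  assumes "finite X" "x \<in> X"
  shows "\<exists>p < card X. sorted_list_of_set X ! p = x"
  using assms by (metis in_set_conv_nth length_sorted_list_of_set set_sorted_list_of_set)

lemma card_le_cut_rank_if_pivots:
  fixes V X :: "'a::linorder set" and S :: "'b set" and x y :: "'b \<Rightarrow> 'a"
  assumes V: "finite V" "X \<subseteq> V" and S: "finite S"
    and xy: "\<forall>i\<in>S. x i \<in> X \<and> y i \<in> V - X"
    and diag: "\<forall>i\<in>S. adj (x i) (y i)"
    and pivot: "\<And>T. T \<subseteq> S \<Longrightarrow> T \<noteq> {} \<Longrightarrow> \<exists>i\<in>T. \<forall>j\<in>T - {i}. \<not> adj (x i) (y j)"
  shows "card S \<le> cut_rank V adj X"
proof -
  have "finite X" "finite (V - X)"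
    using V finite_subset by auto
  then have "\<forall>i\<in>S. (\<exists>p < card X. sorted_list_of_set X ! p = x i)
      \<and> (\<exists>q < card (V - X). sorted_list_of_set (V - X) ! q = y i)"
    using xy ex_nth_sorted_list_of_set by blast
  then obtain r c where rc: "\<forall>i\<in>S. r i < card X \<and> sorted_list_of_set X ! r i = x i
      \<and> c i < card (V - X) \<and> sorted_list_of_set (V - X) ! c i = y i"
    by metis
  have entry: "cut_matrix V adj X $$ (r i, c j) = (if adj (x i) (y j) then 1 else 0)"
    if "i \<in> S" "j \<in> S" for i j
    using that rc index_cut_matrix[OF V] by simp
  show ?thesis
    unfolding cut_rank_def
  proof (rule card_le_rank_if_pivots[OF carrier_cut_matrix[OF V] S])
    show "\<forall>i\<in>S. r i < card X \<and> c i < card (V - X)"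
      using rc by blast
    show "\<forall>i\<in>S. cut_matrix V adj X $$ (r i, c i) \<noteq> 0"
      using diag entry by simp
    show "\<exists>i\<in>T. \<forall>j\<in>T - {i}. cut_matrix V adj X $$ (r i, c j) = 0"
      if "T \<subseteq> S" "T \<noteq> {}" for T
      using pivot[OF that] entry that by (metis Diff_iff subsetD)
  qed
qed

lemma ex_pivot_if_upper_triangular:
  fixes T :: "'b::linorder set"
  assumes "finite T" "T \<noteq> {}" and "\<forall>i\<in>T. \<forall>j\<in>T. i < j \<longrightarrow> Z i j"
  shows "\<exists>i\<in>T. \<forall>j\<in>T - {i}. Z i j"
  using assms by (metis DiffE Min_in Min_le insertCI order_le_neq_trans)

lemma ex_pivot_if_lower_triangular:
  fixes T :: "'b::linorder set"
  assumes "finite T" "T \<noteq> {}" and "\<forall>i\<in>T. \<forall>j\<in>T. j < i \<longrightarrow> Z i j"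
  shows "\<exists>i\<in>T. \<forall>j\<in>T - {i}. Z i j"
  using assms by (metis DiffE Max_in Max_ge insertCI order_le_neq_trans)

definition mixed_lines :: "nat \<Rightarrow> (nat \<Rightarrow> nat \<Rightarrow> nat \<times> nat) \<Rightarrow> (nat \<times> nat) set \<Rightarrow> nat set" where
  "mixed_lines n L X = {i \<in> {1..n}. (\<exists>h\<in>{1..n}. L i h \<in> X) \<and> (\<exists>h\<in>{1..n}. L i h \<notin> X)}"

abbreviation mixed_columns :: "nat \<Rightarrow> (nat \<times> nat) set \<Rightarrow> nat set" where
  "mixed_columns n X \<equiv> mixed_lines n Pair X"

abbreviation mixed_rows :: "nat \<Rightarrow> (nat \<times> nat) set \<Rightarrow> nat set" where
  "mixed_rows n X \<equiv> mixed_lines n (\<lambda>i h. (h, i)) X"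

lemma card_lines_starting_outside_le_cut_rank:
  assumes X: "X \<subseteq> grid_vertices n n"
    and L_grid: "\<And>i h. i \<in> {1..n} \<Longrightarrow> h \<in> {1..n} \<Longrightarrow> L i h \<in> grid_vertices n n"
    and L_adj: "\<And>i h j k. comp_grid_adj (L i h) (L j k) = comp_grid_adj (i, h) (j, k)"
  shows "card {i \<in> {1..n}. L i 1 \<notin> X \<and> (\<exists>h\<in>{1..n}. L i h \<in> X)}
    \<le> cut_rank (grid_vertices n n) comp_grid_adj X" (is "card ?A \<le> _")
proof -
  have ex: "\<forall>i\<in>?A. \<exists>h. 1 < h \<and> h \<le> n \<and> L i h \<in> X"
    by (auto simp: le_less)
  obtain h where h: "\<forall>i\<in>?A. 1 < h i \<and> h i \<le> n \<and> L i (h i) \<in> X"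
    using bchoice[OF ex] by blast
  show ?thesis
  proof (rule card_le_cut_rank_if_pivots[OF _ X, where x = "\<lambda>i. L i (h i)" and y = "\<lambda>i. L i 1"])
    show "finite (grid_vertices n n)" "finite ?A"
      by (simp_all add: grid_vertices_def)
    show "\<forall>i\<in>?A. L i (h i) \<in> X \<and> L i 1 \<in> grid_vertices n n - X"
      using h L_grid by auto
    show "\<forall>i\<in>?A. comp_grid_adj (L i (h i)) (L i 1)"
    proof
      fix i assume "i \<in> ?A"
      then have "1 < h i"
        using h by blast
      then show "comp_grid_adj (L i (h i)) (L i 1)"
        unfolding L_adj by (simp add: comp_grid_adj_def)
    qed
    show "\<exists>i\<in>T. \<forall>j\<in>T - {i}. \<not> comp_grid_adj (L i (h i)) (L j 1)"
      if T: "T \<subseteq> ?A" "T \<noteq> {}" for T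
    proof (rule ex_pivot_if_upper_triangular)
      show "finite T"
        using T(1) by (rule finite_subset) simp
      have "\<forall>i\<in>T. 1 < h i"
        using T(1) h by blast
      then show "\<forall>i\<in>T. \<forall>j\<in>T. i < j \<longrightarrow> \<not> comp_grid_adj (L i (h i)) (L j 1)"
        unfolding L_adj by (auto simp: comp_grid_adj_def)
    qed (fact T(2))
  qed
qed

lemma card_lines_starting_inside_le_cut_rank:
  assumes X: "X \<subseteq> grid_vertices n n"
    and L_grid: "\<And>i h. i \<in> {1..n} \<Longrightarrow> h \<in> {1..n} \<Longrightarrow> L i h \<in> grid_vertices n n"
    and L_adj: "\<And>i h j k. comp_grid_adj (L i h) (L j k) = comp_grid_adj (i, h) (j, k)"
  shows "card {i \<in> {1..n}. L i 1 \<in> X \<and> (\<exists>h\<in>{1..n}. L i h \<notin> X)}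
    \<le> cut_rank (grid_vertices n n) comp_grid_adj X" (is "card ?B \<le> _")
proof -
  have ex: "\<forall>i\<in>?B. \<exists>h. 1 < h \<and> h \<le> n \<and> L i h \<notin> X"
    by (auto simp: le_less)
  obtain h where h: "\<forall>i\<in>?B. 1 < h i \<and> h i \<le> n \<and> L i (h i) \<notin> X"
    using bchoice[OF ex] by blast
  show ?thesis
  proof (rule card_le_cut_rank_if_pivots[OF _ X, where x = "\<lambda>i. L i 1" and y = "\<lambda>i. L i (h i)"])
    show "finite (grid_vertices n n)" "finite ?B"
      by (simp_all add: grid_vertices_def)
    show "\<forall>i\<in>?B. L i 1 \<in> X \<and> L i (h i) \<in> grid_vertices n n - X"
      using h L_grid by auto
    show "\<forall>i\<in>?B. comp_grid_adj (L i 1) (L i (h i))"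
    proof
      fix i assume "i \<in> ?B"
      then have "1 < h i"
        using h by blast
      then show "comp_grid_adj (L i 1) (L i (h i))"
        unfolding L_adj by (simp add: comp_grid_adj_def)
    qed
    show "\<exists>i\<in>T. \<forall>j\<in>T - {i}. \<not> comp_grid_adj (L i 1) (L j (h j))"
      if T: "T \<subseteq> ?B" "T \<noteq> {}" for T
    proof (rule ex_pivot_if_lower_triangular)
      show "finite T"
        using T(1) by (rule finite_subset) simp
      have "\<forall>i\<in>T. 1 < h i"
        using T(1) h by blast
      then show "\<forall>i\<in>T. \<forall>j\<in>T. j < i \<longrightarrow> \<not> comp_grid_adj (L i 1) (L j (h j))"
        unfolding L_adj by (auto simp: comp_grid_adj_def)
    qed (fact T(2))
  qed
qed

lemma card_mixed_lines_le_cut_rank: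
  assumes X: "X \<subseteq> grid_vertices n n"
    and L_grid: "\<And>i h. i \<in> {1..n} \<Longrightarrow> h \<in> {1..n} \<Longrightarrow> L i h \<in> grid_vertices n n"
    and L_adj: "\<And>i h j k. comp_grid_adj (L i h) (L j k) = comp_grid_adj (i, h) (j, k)"
  shows "card (mixed_lines n L X) \<le> 2 * cut_rank (grid_vertices n n) comp_grid_adj X"
proof -
  let ?A = "{i \<in> {1..n}. L i 1 \<notin> X \<and> (\<exists>h\<in>{1..n}. L i h \<in> X)}"
    and ?B = "{i \<in> {1..n}. L i 1 \<in> X \<and> (\<exists>h\<in>{1..n}. L i h \<notin> X)}"
  have "mixed_lines n L X \<subseteq> ?A \<union> ?B"
    by (auto simp: mixed_lines_def)
  then have "card (mixed_lines n L X) \<le> card ?A + card ?B"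
    by (rule order_trans[OF card_mono card_Un_le, rotated]) simp
  then show ?thesis
    using card_lines_starting_outside_le_cut_rank[OF assms] card_lines_starting_inside_le_cut_rank[OF assms]
    by linarith
qed

lemma card_mixed_columns_le_cut_rank:
  assumes "X \<subseteq> grid_vertices n n"
  shows "card (mixed_columns n X) \<le> 2 * cut_rank (grid_vertices n n) comp_grid_adj X"
  by (rule card_mixed_lines_le_cut_rank[OF assms]) (auto simp: grid_vertices_def)

lemma card_mixed_rows_le_cut_rank:
  assumes "X \<subseteq> grid_vertices n n"
  shows "card (mixed_rows n X) \<le> 2 * cut_rank (grid_vertices n n) comp_grid_adj X"
  by (rule card_mixed_lines_le_cut_rank[OF assms]) (auto simp: grid_vertices_def comp_grid_adj_def)

lemma subset_mixed_columns_times_mixed_rows: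
  fixes X :: "(nat \<times> nat) set"
  assumes X: "X \<subseteq> {1..n} \<times> {1..n}"
    and c: "c \<in> {1..n}" "c \<notin> mixed_columns n X" and r: "r \<in> {1..n}" "r \<notin> mixed_rows n X"
  shows "X \<subseteq> mixed_columns n X \<times> mixed_rows n X
    \<or> {1..n} \<times> {1..n} - X \<subseteq> mixed_columns n X \<times> mixed_rows n X"
proof -
  have col: "\<forall>j\<in>{1..n}. (c, j) \<in> X \<longleftrightarrow> (c, r) \<in> X"
    using c r unfolding mixed_lines_def by auto
  have row: "\<forall>i\<in>{1..n}. (i, r) \<in> X \<longleftrightarrow> (c, r) \<in> X"
    using c r unfolding mixed_lines_def by auto
  show ?thesis
  proof (cases "(c, r) \<in> X")
    case True
    have "(i, j) \<in> mixed_columns n X \<times> mixed_rows n X"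
      if "i \<in> {1..n}" "j \<in> {1..n}" "(i, j) \<notin> X" for i j
      using that row col True c(1) r(1) unfolding mixed_lines_def by blast
    then show ?thesis
      by blast
  next
    case False
    have "(i, j) \<in> mixed_columns n X \<times> mixed_rows n X" if "(i, j) \<in> X" for i j
      using that X row col False c(1) r(1) unfolding mixed_lines_def by blast
    then show ?thesis
      by (simp add: subrelI)
  qed
qed

lemma ex_in_atLeastAtMost_notin:
  fixes M :: "nat set"
  assumes "finite M" "card M < n"
  shows "\<exists>i\<in>{1..n}. i \<notin> M"
  using assms card_mono[of M "{1..n}"] by fastforce

lemma card_dichotomy_if_few_mixed_lines:
  fixes X :: "(nat \<times> nat) set"
  assumes X: "X \<subseteq> {1..n} \<times> {1..n}" and "n \<ge> 1"
    and C: "2 * card (mixed_columns n X) \<le> n" and R: "2 * card (mixed_rows n X) \<le> n"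
  shows "4 * card X \<le> n^2 \<or> 3 * n^2 \<le> 4 * card X"
proof -
  let ?M = "mixed_columns n X \<times> mixed_rows n X"
  have fin: "finite (mixed_columns n X)" "finite (mixed_rows n X)"
    by (simp_all add: mixed_lines_def)
  obtain c where c: "c \<in> {1..n}" "c \<notin> mixed_columns n X"
    using ex_in_atLeastAtMost_notin[OF fin(1)] C \<open>n \<ge> 1\<close> by fastforce
  obtain r where r: "r \<in> {1..n}" "r \<notin> mixed_rows n X"
    using ex_in_atLeastAtMost_notin[OF fin(2)] R \<open>n \<ge> 1\<close> by fastforce
  have M: "4 * card ?M \<le> n^2"
    using mult_le_mono[OF C R] by (simp add: card_cartesian_product power2_eq_square)
  from subset_mixed_columns_times_mixed_rows[OF X c r] show ?thesis
  proof (elim disjE)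
    assume "X \<subseteq> ?M"
    then have "card X \<le> card ?M"
      using fin by (intro card_mono) simp_all
    then show ?thesis
      using M by linarith
  next
    assume "{1..n} \<times> {1..n} - X \<subseteq> ?M"
    then have "card ({1..n} \<times> {1..n} - X) \<le> card ?M"
      using fin by (intro card_mono) simp_all
    then have "n^2 - card X \<le> card ?M"
      using X by (simp add: card_Diff_subset finite_subset card_cartesian_product power2_eq_square)
    moreover have "card X \<le> n^2"
      using X card_mono[OF _ X] by (simp add: card_cartesian_product power2_eq_square)
    ultimately show ?thesis
      using M by linarith
  qed
qed

theorem mainTheorem8:
  fixes n :: nat and X :: "(nat \<times> nat) set"
  assumes "n \<ge> 1"
    and "X \<subseteq> grid_vertices n n"
    and "real (card X) \<le> real n ^ 2 / 2"
    and "real (cut_rank (grid_vertices n n) comp_grid_adj X) \<le> real n / 4"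
  shows "real (card X) < real n ^ 2 / 3"
proof -
  let ?t = "cut_rank (grid_vertices n n) comp_grid_adj X"
  have "4 * ?t \<le> n"
    using assms(4) by simp
  then have "2 * card (mixed_columns n X) \<le> n" "2 * card (mixed_rows n X) \<le> n"
    using card_mixed_columns_le_cut_rank[OF assms(2)] card_mixed_rows_le_cut_rank[OF assms(2)]
    by linarith+
  then have "4 * card X \<le> n^2 \<or> 3 * n^2 \<le> 4 * card X"
    using assms(1,2) by (intro card_dichotomy_if_few_mixed_lines) (simp_all add: grid_vertices_def)
  moreover have "2 * card X \<le> n^2"
    using assms(3) by (simp add: field_simps flip: of_nat_power)
  moreover have "1 \<le> n^2"
    using assms(1) by simp
  ultimately have "3 * card X < n^2"
    by linarith
  then show ?thesis
    by (simp add: field_simps flip: of_nat_power)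
qed

end
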